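(* Let $S=\gamma+\frac{L_{-4}'(1)}{L_{-4}(1)}$ (Sierpinski's constant, the Euler–Kronecker constant of $\mathbb{Q}(i)$). Then $S=2\gamma+\frac4\pi J_2$, where $J_2=\int_0^1\frac{\ln(-\ln x)}{1+x^2}dx$, and for every $0<b<\pi/2$ $$J_2=\frac12\sum_{k=1}^\infty\frac{E_{2k}b^{2k+1}}{(2k+1)!}\left[\ln b-\frac{1}{2k+1}\right]+\frac b2(\ln b-1)+\frac12\int_b^\infty\frac{\ln u}{\cosh u}du.$$ In particular, $$J_2=-\frac12\left[1+\sum_{k=1}^\infty\frac{E_{2k}}{(2k+1)!}\frac{1}{2k+1}\right]+\frac12\int_1^\infty\frac{\ln u}{\cosh u}du.$$
   Context: $\gamma$ is Euler's constant, $L_{-4}(s)=\sum_{n\ge0}(-1)^n(2n+1)^{-s}$, and $E_{2k}$ are the Euler numbers, defined by $\operatorname{sech}x=1+\sum_{k\ge1}\frac{E_{2k}}{(2k)!}x^{2k}$ for $|x|<\pi/2$. *)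

theory Defs
  imports "HOL-Analysis.Analysis"
begin

text \<open>Dirichlet L-function of the non-principal character mod 4, for real s
  (the defining series converges for s > 0).\<close>
definition L4 :: "real \<Rightarrow> real" where
  "L4 s = (\<Sum>n. (-1) ^ n / (real (2 * n + 1)) powr s)"

definition sierpinski_S :: real where
  "sierpinski_S = euler_mascheroni + deriv L4 1 / L4 1"

text \<open>Euler numbers: euler_num k is E_{2k}, defined by
  sech x = sum over k of E_{2k}/(2k)! x^(2k) for |x| < pi/2 (so E_0 = 1).\<close>
definition euler_num :: "nat \<Rightarrow> real" where
  "euler_num = (SOME E. \<forall>x::real. \<bar>x\<bar> < pi / 2 \<longrightarrow>
      (\<lambda>k. E k / fact (2 * k) * x ^ (2 * k)) sums (1 / cosh x))"

definition J2 :: real where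
  "J2 = (LBINT x:{0<..<1}. ln (- ln x) / (1 + x\<^sup>2))"

end

theory Submission
  imports Defs "HOL-Complex_Analysis.Complex_Analysis"
begin

text \<open>
  Expanding 1/(2 cosh t) = \<Sum>n. (-1)^n exp (-(2n+1) t) and integrating termwise against t^(s-1)
  gives \<Gamma>(s) L(s) = \<integral>(0,\<infinity>) t^(s-1) / (2 cosh t) dt for every s > 0. Differentiating at s = 1,
  where \<Gamma>'(1) = -\<gamma> and L(1) = \<pi>/4, gives L'(1) = \<gamma>\<pi>/4 + \<integral>(0,\<infinity>) ln t / (2 cosh t) dt, and the
  substitution x = exp (-t) identifies the last integral with J2.

  For the series, split 2 J2 = \<integral>(0,\<infinity>) ln u / cosh u du at b, expand 1/cosh u on (0, b) into its
  Taylor series (absolutely convergent there, since cosh has no complex zeros in the disc of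
  radius \<pi>/2) and integrate the terms u^(2k) ln u explicitly; b = 1 gives the last formula.
\<close>

section \<open>Gamma integrals as Lebesgue integrals\<close>

lemma has_integral_nonneg_imp_set_integral:
  fixes f :: "real \<Rightarrow> real"
  assumes I: "(f has_integral I) S" and nonneg: "\<And>x. x \<in> S \<Longrightarrow> 0 \<le> f x"
    and meas: "set_borel_measurable lborel S f"
  shows "set_integrable lborel S f" "(LBINT x:S. f x) = I"
proof -
  have "f absolutely_integrable_on S"
    using I nonneg by (intro nonnegative_absolutely_integrable_1) (auto simp: has_integral_integrable)
  then have "integrable lebesgue (\<lambda>x. indicator S x *\<^sub>R f x)" by (simp add: set_integrable_def)
  with meas show si: "set_integrable lborel S f"
    unfolding set_integrable_def set_borel_measurable_def using integrable_completion by blast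
  show "(LBINT x:S. f x) = I"
    using set_borel_integral_eq_integral(2)[OF si] I by (simp add: integral_unique)
qed

lemma Gamma_set_integral:
  assumes "s > (0::real)"
  shows "set_integrable lborel {0<..} (\<lambda>t. t powr (s - 1) * exp (-t))"
    "(LBINT t:{0<..}. t powr (s - 1) * exp (-t)) = Gamma s"
proof -
  have "((\<lambda>t. t powr (s - 1) * exp (-t)) has_integral Gamma s) {0..}"
    using Gamma_integral_real[OF assms] by (simp add: exp_minus field_simps)
  then have I: "((\<lambda>t. t powr (s - 1) * exp (-t)) has_integral Gamma s) {0<..}"
    by (subst has_integral_spike_set_eq[where T="{0..}"]) (auto intro: negligible_subset[of "{0}"])
  have "set_borel_measurable lborel {0<..} (\<lambda>t. t powr (s - 1) * exp (-t))"
    unfolding set_borel_measurable_def by measurable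
  with has_integral_nonneg_imp_set_integral[OF I]
  show "set_integrable lborel {0<..} (\<lambda>t. t powr (s - 1) * exp (-t))"
    "(LBINT t:{0<..}. t powr (s - 1) * exp (-t)) = Gamma s" by auto
qed

lemma Gamma_scaled_set_integral:
  assumes s: "s > 0" and m: "m > (0::real)"
  shows "set_integrable lborel {0<..} (\<lambda>t. t powr (s - 1) * exp (-(m*t)))"
    "(LBINT t:{0<..}. t powr (s - 1) * exp (-(m*t))) = Gamma s / m powr s"
proof -
  define g where "g = (\<lambda>x::real. indicator {0<..} x *\<^sub>R (x powr (s - 1) * exp (-x)))"
  define h where "h = (\<lambda>x::real. indicator {0<..} x *\<^sub>R (x powr (s - 1) * exp (-(m*x))))"
  have gi: "integrable lborel g"
    using Gamma_set_integral(1)[OF s] by (simp add: set_integrable_def g_def)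
  have gI: "integral\<^sup>L lborel g = Gamma s"
    using Gamma_set_integral(2)[OF s] by (simp add: set_lebesgue_integral_def g_def)
  have g_scaled: "g (0 + m*x) = m powr (s - 1) * h x" for x
    using m by (auto simp: g_def h_def indicator_def powr_mult zero_less_mult_iff)
  have "integrable lborel (\<lambda>x. g (0 + m*x))" using lborel_integrable_real_affine[OF gi, of m 0] m by simp
  then have "integrable lborel h" using m unfolding g_scaled by simp
  then show "set_integrable lborel {0<..} (\<lambda>t. t powr (s - 1) * exp (-(m*t)))"
    by (simp add: set_integrable_def h_def)
  have "Gamma s = m * m powr (s - 1) * integral\<^sup>L lborel h"
    using lborel_integral_real_affine[of m g 0] m gI unfolding g_scaled by simp
  also have "m * m powr (s - 1) = m powr s"
    using m by (simp add: powr_mult_base)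
  finally show "(LBINT t:{0<..}. t powr (s - 1) * exp (-(m*t))) = Gamma s / m powr s"
    using m by (simp add: set_lebesgue_integral_def h_def field_simps)
qed

section \<open>The Mellin transform of 1/(2 cosh t)\<close>

definition half_sech :: "real \<Rightarrow> real" where
  "half_sech t = 1 / (2 * cosh t)"

definition mellin_half_sech :: "real \<Rightarrow> real" where
  "mellin_half_sech s = (LBINT t:{0<..}. t powr (s - 1) * half_sech t)"

lemma borel_measurable_half_sech [measurable]: "half_sech \<in> borel_measurable borel"
  unfolding half_sech_def by (intro borel_measurable_continuous_onI continuous_intros) simp

lemma half_sech_eq_geometric: "half_sech t = exp (-t) / (1 + exp (-(2*t)))"
proof -
  have "2 * cosh t = exp t + exp (-t)" by (simp add: cosh_def)
  moreover have "1 + exp (-(2*t)) = exp (-t) * (exp t + exp (-t))"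
    by (simp add: algebra_simps flip: exp_add)
  ultimately show ?thesis by (simp add: half_sech_def)
qed

lemma half_sech_pos: "half_sech t > 0"
  by (simp add: half_sech_def)

lemma half_sech_le_exp: "half_sech t \<le> exp (-t)"
  unfolding half_sech_eq_geometric by (simp add: divide_le_eq add_pos_pos)

lemma alternating_exp_sum_eq_geometric:
  "(\<Sum>n<N. (-1)^n * exp (-(real (2*n+1) * t))) = exp (-t) * (\<Sum>n<N. (- exp (-(2*t)))^n)"
proof -
  have "(-1)^n * exp (-(real (2*n+1) * t)) = exp (-t) * (- exp (-(2*t)))^n" for n
  proof -
    have "exp (-(real (2*n+1) * t)) = exp (-t) * exp (real n * (-(2*t)))"
      by (simp add: algebra_simps flip: exp_add)
    then show ?thesis by (simp add: power_minus[of "exp (-(2*t))"] flip: exp_of_nat_mult)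
  qed
  then show ?thesis by (simp add: sum_distrib_left)
qed

lemma alternating_exp_sums_half_sech:
  assumes "t > 0"
  shows "(\<lambda>n. (-1)^n * exp (-(real (2*n+1) * t))) sums half_sech t"
proof -
  have "norm (- exp (-(2*t))) < 1" using assms by simp
  from tendsto_mult_left[OF geometric_sums[OF this, unfolded sums_def], of "exp (-t)"]
  show ?thesis
    unfolding sums_def alternating_exp_sum_eq_geometric half_sech_eq_geometric by simp
qed

lemma alternating_exp_sum_bound:
  assumes "t > 0"
  shows "\<bar>\<Sum>n<N. (-1)^n * exp (-(real (2*n+1) * t))\<bar> \<le> 2 * exp (-t)"
proof -
  define q where "q = - exp (-(2*t))"
  have q: "q \<noteq> 1" "\<bar>q\<bar> \<le> 1" "1 - q \<ge> 1"
    unfolding q_def using assms exp_gt_zero[of "-(2*t)"] by (auto simp del: exp_gt_zero)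
  have "\<bar>q^N\<bar> \<le> 1" using q by (simp add: power_abs power_le_one)
  then have "\<bar>(1 - q^N) / (1 - q)\<bar> \<le> 2" using q by (simp add: abs_divide divide_le_eq)
  then have "\<bar>\<Sum>n<N. q^n\<bar> \<le> 2" using q by (simp add: sum_gp_strict)
  then have "exp (-t) * \<bar>\<Sum>n<N. q^n\<bar> \<le> exp (-t) * 2"
    by (intro mult_left_mono) auto
  then show ?thesis
    unfolding alternating_exp_sum_eq_geometric q_def[symmetric] abs_mult by simp
qed

lemma set_integrable_powr_half_sech:
  assumes "s > 0"
  shows "set_integrable lborel {0<..} (\<lambda>t. t powr (s - 1) * half_sech t)"
proof (rule set_integrable_bound[OF Gamma_set_integral(1)[OF assms]])
  show "set_borel_measurable lborel {0<..} (\<lambda>t. t powr (s - 1) * half_sech t)"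
    unfolding set_borel_measurable_def by measurable
  show "AE t in lborel. t \<in> {0<..} \<longrightarrow>
      norm (t powr (s - 1) * half_sech t) \<le> norm (t powr (s - 1) * exp (- t))"
    using half_sech_le_exp half_sech_pos
    by (auto simp: abs_mult less_imp_le intro!: AE_I2 mult_left_mono)
qed

lemma set_integral_powr_alternating_exp_sum:
  assumes s: "s > 0"
  shows "(LBINT t:{0<..}. t powr (s - 1) * (\<Sum>n<N. (-1)^n * exp (-(real (2*n+1) * t))))
    = (\<Sum>n<N. (-1)^n * (Gamma s / real (2*n+1) powr s))"
proof -
  let ?g = "\<lambda>n t. indicator {0<..} t *\<^sub>R (t powr (s - 1) * exp (-(real (2*n+1) * t)))"
  have "(\<lambda>t. indicator {0<..} t *\<^sub>R (t powr (s - 1) * (\<Sum>n<N. (-1)^n * exp (-(real (2*n+1) * t)))))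
      = (\<lambda>t. \<Sum>n<N. (-1)^n * ?g n t)"
    by (simp add: fun_eq_iff sum_distrib_left algebra_simps)
  moreover have "integrable lborel (?g n)" "integral\<^sup>L lborel (?g n) = Gamma s / real (2*n+1) powr s" for n
    using Gamma_scaled_set_integral[OF s, of "real (2*n+1)"]
    by (simp_all add: set_integrable_def set_lebesgue_integral_def)
  ultimately show ?thesis by (simp add: set_lebesgue_integral_def integral_sum)
qed

text \<open>For s \<le> 1 the series is not termwise absolutely integrable; its partial sums are
  dominated by 2 t^(s-1) exp (-t) instead.\<close>

lemma tendsto_set_integral_powr_alternating_exp_sum:
  assumes s: "s > 0"
  shows "(\<lambda>N. LBINT t:{0<..}. t powr (s - 1) * (\<Sum>n<N. (-1)^n * exp (-(real (2*n+1) * t))))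
    \<longlonglongrightarrow> mellin_half_sech s"
  unfolding mellin_half_sech_def set_lebesgue_integral_def
proof (rule integral_dominated_convergence
    [where w="\<lambda>t. 2 * (indicator {0<..} t *\<^sub>R (t powr (s - 1) * exp (-t)))"])
  show "integrable lborel (\<lambda>t. 2 * (indicator {0<..} t *\<^sub>R (t powr (s - 1) * exp (-t))))"
    using Gamma_set_integral(1)[OF s] unfolding set_integrable_def by simp
  show "AE t in lborel. (\<lambda>N. indicator {0<..} t *\<^sub>R
      (t powr (s - 1) * (\<Sum>n<N. (-1)^n * exp (-(real (2*n+1) * t)))))
      \<longlonglongrightarrow> indicator {0<..} t *\<^sub>R (t powr (s - 1) * half_sech t)"
  proof (rule AE_I2)
    fix t :: real
    show "(\<lambda>N. indicator {0<..} t *\<^sub>R (t powr (s - 1) * (\<Sum>n<N. (-1)^n * exp (-(real (2*n+1) * t)))))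
      \<longlonglongrightarrow> indicator {0<..} t *\<^sub>R (t powr (s - 1) * half_sech t)"
      using alternating_exp_sums_half_sech[of t]
      by (cases "t > 0") (simp_all add: sums_def tendsto_mult_left)
  qed
  show "AE t in lborel. norm (indicator {0<..} t *\<^sub>R
      (t powr (s - 1) * (\<Sum>n<N. (-1)^n * exp (-(real (2*n+1) * t)))))
      \<le> 2 * (indicator {0<..} t *\<^sub>R (t powr (s - 1) * exp (-t)))" for N
  proof (rule AE_I2)
    fix t :: real
    show "norm (indicator {0<..} t *\<^sub>R (t powr (s - 1) * (\<Sum>n<N. (-1)^n * exp (-(real (2*n+1) * t)))))
      \<le> 2 * (indicator {0<..} t *\<^sub>R (t powr (s - 1) * exp (-t)))"
    proof (cases "t > 0")
      case True
      then have "t powr (s - 1) * \<bar>\<Sum>n<N. (-1)^n * exp (-(real (2*n+1) * t))\<bar>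
          \<le> t powr (s - 1) * (2 * exp (-t))"
        by (intro mult_left_mono alternating_exp_sum_bound) auto
      then show ?thesis using True by (simp add: abs_mult algebra_simps)
    qed simp
  qed
qed measurable

lemma L4_eq_mellin_half_sech_div_Gamma:
  assumes s: "s > 0"
  shows "L4 s = mellin_half_sech s / Gamma s"
proof -
  from tendsto_divide[OF tendsto_set_integral_powr_alternating_exp_sum[OF s, unfolded
        set_integral_powr_alternating_exp_sum[OF s]] tendsto_const[of "Gamma s"]]
  have "(\<lambda>n. (-1)^n / real (2*n+1) powr s) sums (mellin_half_sech s / Gamma s)"
    using Gamma_real_pos[OF s] by (simp add: sums_def sum_divide_distrib)
  then show ?thesis unfolding L4_def by (simp add: sums_iff)
qed

section \<open>Differentiation at s = 1\<close>

lemma abs_ln_le: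
  fixes t :: real assumes t: "t > 0"
  shows "\<bar>ln t\<bar> \<le> t + 4 * t powr (-1/4)"
proof (cases "t \<ge> 1")
  case True
  have "\<bar>ln t\<bar> = ln t" "ln t \<le> t - 1" "0 \<le> t powr (-1/4)"
    using True ln_le_minus_one[OF t] by auto
  then show ?thesis by linarith
next
  case False
  have "- ln t = 4 * ln (t powr (-1/4))" using t by (simp add: ln_powr)
  also have "\<dots> \<le> 4 * (t powr (-1/4) - 1)" using ln_le_minus_one[of "t powr (-1/4)"] t by simp
  finally show ?thesis using False t by simp
qed

lemma abs_exp_minus_one_le: "\<bar>exp (x::real) - 1\<bar> \<le> \<bar>x\<bar> * exp \<bar>x\<bar>"
proof (cases "x \<ge> 0")
  case True
  have "exp x * (1 - x) \<le> exp x * exp (-x)"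
    using exp_ge_add_one_self[of "-x"] by (intro mult_left_mono) auto
  with True show ?thesis by (simp add: exp_minus field_simps)
next
  case False
  have "exp x \<le> 1" using False by simp
  then have "\<bar>exp x - 1\<bar> = 1 - exp x" "\<bar>x\<bar> * exp \<bar>x\<bar> = (-x) * exp (-x)"
    using False by auto
  moreover have "(-x) * 1 \<le> (-x) * exp (-x)" using False by (intro mult_left_mono) auto
  ultimately show ?thesis using exp_ge_add_one_self[of x] by linarith
qed

lemma abs_powr_diff_quotient_le:
  fixes t h :: real
  assumes t: "t > 0" and h: "h \<noteq> 0" "\<bar>h\<bar> \<le> 1/2"
  shows "\<bar>(t powr h - 1) / h\<bar> \<le> 2 * t + 4 * t powr (-3/4)"
proof -
  define a where "a = ln t"
  have "\<bar>exp (h * a) - 1\<bar> \<le> \<bar>h * a\<bar> * exp \<bar>h * a\<bar>"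
    using abs_exp_minus_one_le[of "h * a"] by simp
  also have "\<dots> \<le> \<bar>h\<bar> * (\<bar>a\<bar> * exp (\<bar>a\<bar> / 2))"
  proof -
    have "\<bar>h\<bar> * \<bar>a\<bar> \<le> 1/2 * \<bar>a\<bar>" using h by (intro mult_right_mono) auto
    then have "\<bar>h * a\<bar> \<le> \<bar>a\<bar> / 2" by (simp add: abs_mult)
    then show ?thesis by (simp add: abs_mult mult_left_mono mult.assoc)
  qed
  finally have quotient: "\<bar>(t powr h - 1) / h\<bar> \<le> \<bar>a\<bar> * exp (\<bar>a\<bar> / 2)"
    using t h by (simp add: powr_def a_def abs_divide divide_le_eq mult.commute)
  have "\<bar>a\<bar> * exp (\<bar>a\<bar> / 2) \<le> 2 * t + 4 * t powr (-3/4)"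
  proof (cases "t \<ge> 1")
    case True
    then have a: "a \<ge> 0" by (simp add: a_def)
    have "a = 2 * ln (t powr (1/2))" using t by (simp add: a_def ln_powr)
    also have "\<dots> \<le> 2 * t powr (1/2)" using ln_le_minus_one[of "t powr (1/2)"] t by simp
    finally have "a * exp (a / 2) \<le> 2 * t powr (1/2) * t powr (1/2)"
      using a t by (intro mult_mono) (auto simp: powr_def a_def)
    also have "\<dots> = 2 * t" using t by (simp flip: powr_add)
    finally show ?thesis using a by (simp add: add_increasing2)
  next
    case False
    then have a: "a < 0" using t by (simp add: a_def)
    have "- a = 4 * ln (t powr (-1/4))" using t by (simp add: a_def ln_powr)
    also have "\<dots> \<le> 4 * t powr (-1/4)" using ln_le_minus_one[of "t powr (-1/4)"] t by simp
    finally have "(-a) * exp (- a / 2) \<le> 4 * t powr (-1/4) * t powr (-1/2)"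
      using a t by (intro mult_mono) (auto simp: powr_def a_def)
    also have "\<dots> = 4 * t powr (-3/4)" using t by (simp flip: powr_add)
    finally show ?thesis using a t by simp
  qed
  with quotient show ?thesis by linarith
qed

lemma set_integrable_ln_half_sech: "set_integrable lborel {0<..} (\<lambda>t. ln t * half_sech t)"
proof (rule set_integrable_bound)
  show "set_integrable lborel {0<..}
      (\<lambda>t::real. t powr (2 - 1) * exp (-t) + 4 * (t powr (3/4 - 1) * exp (-t)))"
    using Gamma_set_integral(1)[of 2] Gamma_set_integral(1)[of "3/4"] by (auto intro: set_integral_add)
  show "set_borel_measurable lborel {0<..} (\<lambda>t. ln t * half_sech t)"
    unfolding set_borel_measurable_def by measurable
  show "AE t in lborel. t \<in> {0<..} \<longrightarrow> norm (ln t * half_sech t)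
      \<le> norm (t powr (2 - 1) * exp (-t) + 4 * (t powr (3/4 - 1) * exp (-t)))"
  proof (rule AE_I2, intro impI)
    fix t :: real assume "t \<in> {0<..}"
    then have t: "t > 0" by simp
    have "\<bar>ln t * half_sech t\<bar> \<le> (t + 4 * t powr (-1/4)) * exp (-t)"
      unfolding abs_mult using abs_ln_le[OF t] half_sech_le_exp[of t] half_sech_pos[of t]
      by (intro mult_mono) auto
    also have "\<dots> = t powr (2 - 1) * exp (-t) + 4 * (t powr (3/4 - 1) * exp (-t))"
      using t by (simp add: algebra_simps)
    finally show "norm (ln t * half_sech t) \<le> norm (t powr (2 - 1) * exp (-t) + 4 * (t powr (3/4 - 1) * exp (-t)))"
      by simp
  qed
qed

lemma mellin_half_sech_diff_quotient:
  assumes "\<bar>h\<bar> < 1"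
  shows "(mellin_half_sech (1 + h) - mellin_half_sech 1) / h
    = (LBINT t:{0<..}. (t powr h - 1) / h * half_sech t)"
proof -
  let ?m = "\<lambda>s t. indicator {0<..} t *\<^sub>R (t powr (s - 1) * half_sech t)"
  have m: "integrable lborel (?m s)" if "s > 0" for s
    using set_integrable_powr_half_sech[OF that] by (simp add: set_integrable_def)
  have "integrable lborel (?m (1 + h))" by (rule m) (use assms in linarith)
  moreover have "integrable lborel (?m 1)" by (rule m) simp
  ultimately have "(mellin_half_sech (1 + h) - mellin_half_sech 1) / h
      = integral\<^sup>L lborel (\<lambda>t. (?m (1 + h) t - ?m 1 t) / h)"
    unfolding mellin_half_sech_def set_lebesgue_integral_def integral_divide_zero
    by (rule arg_cong[where f="\<lambda>x. x / h", OF Bochner_Integration.integral_diff[symmetric]])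
  also have "\<dots> = (LBINT t:{0<..}. (t powr h - 1) / h * half_sech t)"
    unfolding set_lebesgue_integral_def
    by (rule Bochner_Integration.integral_cong) (auto simp: indicator_def field_simps)
  finally show ?thesis .
qed

lemma integral_dominated_convergence_at_0:
  fixes s :: "real \<Rightarrow> 'a \<Rightarrow> real" and f w :: "'a \<Rightarrow> real"
  assumes "f \<in> borel_measurable M" "\<And>h. s h \<in> borel_measurable M" "integrable M w"
    and lim: "AE x in M. ((\<lambda>h. s h x) \<longlongrightarrow> f x) (at 0)"
    and "d > 0" and bound: "\<And>h. h \<noteq> 0 \<Longrightarrow> \<bar>h\<bar> \<le> d \<Longrightarrow> AE x in M. norm (s h x) \<le> w x"
  shows "((\<lambda>h. integral\<^sup>L M (s h)) \<longlongrightarrow> integral\<^sup>L M f) (at 0)"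
  unfolding tendsto_at_iff_sequentially
proof (intro allI impI)
  fix X :: "nat \<Rightarrow> real"
  assume X: "\<forall>i. X i \<in> UNIV - {0}" "X \<longlonglongrightarrow> 0"
  with \<open>d > 0\<close> have "eventually (\<lambda>i. \<bar>X i\<bar> < d) sequentially"
    by (auto dest: order_tendstoD simp: tendsto_iff dist_real_def)
  then obtain N where N: "\<And>i. i \<ge> N \<Longrightarrow> \<bar>X i\<bar> < d" by (auto simp: eventually_sequentially)
  have X_at: "filterlim X (at 0) sequentially"
    using X by (intro filterlim_atI) auto
  show "((\<lambda>h. integral\<^sup>L M (s h)) \<circ> X) \<longlonglongrightarrow> integral\<^sup>L M f"
    unfolding comp_def
  proof (rule LIMSEQ_offset[where k=N], rule integral_dominated_convergence[where w=w])
    show "AE x in M. norm (s (X (i + N)) x) \<le> w x" for i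
      using N[of "i+N"] X(1) by (intro bound) auto
    show "AE x in M. (\<lambda>i. s (X (i + N)) x) \<longlonglongrightarrow> f x"
      using lim
    proof eventually_elim
      fix x assume "((\<lambda>h. s h x) \<longlongrightarrow> f x) (at 0)"
      then show "(\<lambda>i. s (X (i + N)) x) \<longlonglongrightarrow> f x"
        by (intro LIMSEQ_ignore_initial_segment filterlim_compose[OF _ X_at])
    qed
  qed (use assms in auto)
qed

lemma tendsto_set_integral_powr_diff_quotient_half_sech:
  "((\<lambda>h. LBINT t:{0<..}. (t powr h - 1) / h * half_sech t)
    \<longlongrightarrow> (LBINT t:{0<..}. ln t * half_sech t)) (at 0)"
proof -
  define B where "B t = 2 * (indicator {0<..} t *\<^sub>R (t powr (2 - 1) * exp (-t)))
      + 4 * (indicator {0<..} t *\<^sub>R (t powr (1/4 - 1) * exp (-t)))" for t :: real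
  show ?thesis
    unfolding set_lebesgue_integral_def
  proof (rule integral_dominated_convergence_at_0[where w=B and d="1/2"])
    show "integrable lborel B"
      using Gamma_set_integral(1)[of 2] Gamma_set_integral(1)[of "1/4"]
      unfolding B_def set_integrable_def by auto
    show "AE t in lborel. ((\<lambda>h. indicator {0<..} t *\<^sub>R ((t powr h - 1) / h * half_sech t))
        \<longlongrightarrow> indicator {0<..} t *\<^sub>R (ln t * half_sech t)) (at 0)"
    proof (rule AE_I2)
      fix t :: real
      show "((\<lambda>h. indicator {0<..} t *\<^sub>R ((t powr h - 1) / h * half_sech t))
        \<longlongrightarrow> indicator {0<..} t *\<^sub>R (ln t * half_sech t)) (at 0)"
      proof (cases "t > 0")
        case True
        have "((\<lambda>h. exp (h * ln t)) has_real_derivative ln t) (at 0)"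
          by (auto intro!: derivative_eq_intros)
        then have "((\<lambda>h. (t powr h - 1) / h) \<longlongrightarrow> ln t) (at 0)"
          using True by (simp add: DERIV_def powr_def)
        then have "((\<lambda>h. (t powr h - 1) / h * half_sech t) \<longlongrightarrow> ln t * half_sech t) (at 0)"
          by (rule tendsto_mult_right)
        then show ?thesis using True by simp
      qed simp
    qed
    show "AE t in lborel. norm (indicator {0<..} t *\<^sub>R ((t powr h - 1) / h * half_sech t)) \<le> B t"
      if "h \<noteq> 0" "\<bar>h\<bar> \<le> 1/2" for h
    proof (rule AE_I2)
      fix t :: real
      show "norm (indicator {0<..} t *\<^sub>R ((t powr h - 1) / h * half_sech t)) \<le> B t"
      proof (cases "t > 0")
        case True
        have "\<bar>(t powr h - 1) / h\<bar> * half_sech t \<le> (2 * t + 4 * t powr (-3/4)) * exp (-t)"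
          using abs_powr_diff_quotient_le[OF True that] half_sech_le_exp[of t] half_sech_pos[of t] True
          by (intro mult_mono) (auto intro!: add_nonneg_nonneg)
        also have "\<dots> = B t" using True by (simp add: B_def algebra_simps)
        finally show ?thesis using True half_sech_pos[of t] by (simp add: abs_mult)
      qed (simp add: B_def)
    qed
  qed (simp_all, measurable)
qed

lemma mellin_half_sech_has_derivative_at_1:
  "(mellin_half_sech has_real_derivative (LBINT t:{0<..}. ln t * half_sech t)) (at 1)"
proof -
  have "eventually (\<lambda>h. (LBINT t:{0<..}. (t powr h - 1) / h * half_sech t)
      = (mellin_half_sech (1 + h) - mellin_half_sech 1) / h) (at 0)"
    unfolding eventually_at by (intro exI[of _ 1]) (simp add: mellin_half_sech_diff_quotient)
  from tendsto_cong[OF this] tendsto_set_integral_powr_diff_quotient_half_sech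
  show ?thesis unfolding DERIV_def by simp
qed

lemma L4_1: "L4 1 = pi / 4"
proof -
  have "(\<lambda>n. (-1)^n / real (2*n+1) powr 1) = (\<lambda>k. (-1)^k * 1 / real (k*2+1))"
    by (simp add: fun_eq_iff mult.commute)
  then show ?thesis unfolding L4_def using pi_series by simp
qed

lemma sierpinski_S_eq_integral_ln_half_sech:
  "sierpinski_S = 2 * euler_mascheroni + 4 / pi * (LBINT t:{0<..}. ln t * half_sech t)"
proof -
  define I where "I = (LBINT t:{0<..}. ln t * half_sech t)"
  have mellin_1: "mellin_half_sech 1 = pi / 4"
    using L4_eq_mellin_half_sech_div_Gamma[of 1] L4_1 by simp
  have "((\<lambda>s. mellin_half_sech s / Gamma s) has_real_derivative
      ((I * Gamma 1 - mellin_half_sech 1 * (Gamma 1 * Digamma 1)) / (Gamma 1 * Gamma 1))) (at 1)"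
    by (rule DERIV_divide[OF mellin_half_sech_has_derivative_at_1[folded I_def]
          has_field_derivative_Gamma]) auto
  then have "((\<lambda>s. mellin_half_sech s / Gamma s) has_real_derivative I + euler_mascheroni * (pi / 4)) (at 1)"
    using mellin_1 by (simp add: mult.commute)
  then have "(L4 has_real_derivative I + euler_mascheroni * (pi / 4)) (at 1)"
    by (rule has_field_derivative_transform_within_open[of _ _ _ "{0<..}"])
      (auto simp: L4_eq_mellin_half_sech_div_Gamma)
  then have "deriv L4 1 = I + euler_mascheroni * (pi / 4)" by (rule DERIV_imp_deriv)
  then show ?thesis unfolding sierpinski_S_def I_def[symmetric] L4_1
    by (simp add: field_simps)
qed

lemma J2_eq_integral_ln_half_sech: "J2 = (LBINT t:{0<..}. ln t * half_sech t)"
proof -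
  define f where "f x = ln (- ln x) / (1 + x\<^sup>2)" for x :: real
  define h where "h = (\<lambda>u. exp u *\<^sub>R f (exp u))"
  have h_reflect: "h (-t) = ln t * half_sech t" for t
  proof -
    have "(exp (-t))^2 = exp (-(2*t))" by (simp add: power2_eq_square flip: exp_add)
    then show ?thesis by (simp add: h_def f_def half_sech_eq_geometric)
  qed
  have "interval_lebesgue_integrable lborel 0 \<infinity> (\<lambda>t. h (-t))"
    unfolding h_reflect interval_lebesgue_integral_0_infty(1) by (rule set_integrable_ln_half_sech)
  then have "interval_lebesgue_integrable lborel (-\<infinity>) (-0) h"
    by (subst (asm) interval_integrable_mirror) simp
  then have h_int: "set_integrable lborel (einterval (-\<infinity>) (ereal 0)) h"
    by (simp add: interval_lebesgue_integrable_def zero_ereal_def)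
  have lim_bot: "((ereal \<circ> exp \<circ> real_of_ereal) \<longlongrightarrow> ereal 0) (at_right (-\<infinity>))"
    unfolding comp_assoc[symmetric] ereal_tendsto_simps by (rule exp_at_bot)
  have lim_0: "((ereal \<circ> exp \<circ> real_of_ereal) \<longlongrightarrow> ereal 1) (at_left (ereal 0))"
    unfolding comp_assoc[symmetric] ereal_tendsto_simps by (auto intro!: tendsto_eq_intros)
  have cont: "isCont (\<lambda>x. \<bar>f x\<bar>) (exp u)" "isCont f (exp u)" if "u < 0" for u
    using that unfolding f_def by (auto intro!: continuous_intros simp: add_nonneg_eq_0_iff)
  \<comment> \<open>integrability of f on (0, 1) is not known beforehand; it is transported from
      (-\<infinity>, 0) by the substitution for the nonnegative function \<bar>f\<bar>\<close>
  have "set_integrable lborel (einterval (ereal 0) (ereal 1)) (\<lambda>x. \<bar>f x\<bar>)"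
  proof (rule interval_integral_substitution_nonneg(1)[of "-\<infinity>" "ereal 0" exp exp])
    show "set_integrable lborel (einterval (- \<infinity>) (ereal 0)) (\<lambda>x. \<bar>f (exp x)\<bar> * exp x)"
      using set_integrable_abs[OF h_int] by (simp add: h_def abs_mult mult.commute)
  qed (use lim_bot lim_0 cont in \<open>auto intro!: derivative_eq_intros\<close>)
  then have f_int: "set_integrable lborel (einterval (ereal 0) (ereal 1)) f"
    by (subst (asm) set_integrable_abs_iff) (auto simp: set_borel_measurable_def f_def)
  have "(LBINT x=ereal 0..ereal 1. f x) = (LBINT u=-\<infinity>..ereal 0. exp u *\<^sub>R f (exp u))"
    by (rule interval_integral_substitution_integrable[of "-\<infinity>" "ereal 0" exp exp])
      (use lim_bot lim_0 cont f_int h_int[unfolded h_def] in \<open>auto intro!: derivative_eq_intros\<close>)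
  also have "\<dots> = (LBINT t=-ereal 0..-(-\<infinity>). h (-t))"
    unfolding h_def by (rule interval_integral_reflect)
  also have "\<dots> = (LBINT t=0..\<infinity>. h (-t))" by (simp add: zero_ereal_def)
  also have "\<dots> = (LBINT t:{0<..}. ln t * half_sech t)"
    unfolding interval_lebesgue_integral_0_infty(2) h_reflect ..
  finally show ?thesis
    by (simp add: J2_def f_def interval_lebesgue_integral_def)
qed

section \<open>Termwise integration of the Taylor series of sech\<close>

lemma cosh_nonzero_in_ball:
  fixes z :: complex assumes "norm z < pi/2" shows "cosh z \<noteq> 0"
proof
  assume "cosh z = 0"
  then have "cos (\<i>*z) = 0" by (simp add: cosh_conv_cos)
  then obtain n :: int where "\<i>*z = complex_of_real (n*pi) + of_real pi/2"
    by (auto simp: cos_eq_0)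
  then have "\<i>*z = complex_of_real (pi * (real_of_int n + 1/2))"
    by (simp add: algebra_simps)
  then have "norm (\<i>*z) = \<bar>pi * (real_of_int n + 1/2)\<bar>"
    by (simp only: norm_of_real)
  then have "norm z = pi * \<bar>real_of_int n + 1/2\<bar>"
    by (simp add: norm_mult abs_mult)
  moreover have "\<bar>real_of_int n + 1/2\<bar> \<ge> 1/2"
  proof (cases "n \<ge> 0")
    case False
    then have "real_of_int n \<le> -1" by simp
    then show ?thesis by simp
  qed simp
  then have "pi * \<bar>real_of_int n + 1/2\<bar> \<ge> pi * (1/2)"
    by (intro mult_left_mono) auto
  ultimately show False using assms by linarith
qed

lemma cosh_complex_of_real: "cosh (complex_of_real x) = complex_of_real (cosh x)"
  by (simp add: cosh_def scaleR_conv_of_real exp_of_real flip: of_real_minus)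

lemma sech_taylor_series_exists:
  "\<exists>E. \<forall>x::real. \<bar>x\<bar> < pi/2 \<longrightarrow> (\<lambda>k. E k / fact (2*k) * x^(2*k)) sums (1 / cosh x)"
proof -
  define f where "f = (\<lambda>z::complex. 1 / cosh z)"
  have hol: "f holomorphic_on ball 0 (pi/2)" unfolding f_def
    by (intro analytic_imp_holomorphic analytic_intros) (auto simp: cosh_nonzero_in_ball)
  define a where "a n = Re ((deriv ^^ n) f 0 / fact n)" for n
  have taylor: "(\<lambda>n. a n * x^n) sums (1 / cosh x)" if "\<bar>x\<bar> < pi/2" for x :: real
  proof -
    have "of_real x \<in> ball (0::complex) (pi/2)" using that by simp
    from sums_Re[OF holomorphic_power_series[OF hol this]]
    have "(\<lambda>n. Re ((deriv ^^ n) f 0 / fact n * (complex_of_real x - 0) ^ n)) sums Re (f (of_real x))" .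
    moreover have "Re (f (of_real x)) = 1 / cosh x"
      unfolding f_def by (simp add: cosh_complex_of_real)
    moreover have "Re ((deriv ^^ n) f 0 / fact n * (complex_of_real x - 0) ^ n) = a n * x^n" for n
    proof -
      have "Re (w * complex_of_real r) = Re w * r" for w r by simp
      from this[of "(deriv ^^ n) f 0 / fact n" "x^n"] show ?thesis
        unfolding a_def by (simp only: diff_zero of_real_power)
    qed
    ultimately show ?thesis by simp
  qed
  define E where "E k = a (2*k) * fact (2*k)" for k
  have "(\<lambda>k. E k / fact (2*k) * x^(2*k)) sums (1 / cosh x)" if "\<bar>x\<bar> < pi/2" for x :: real
  proof -
    have "(\<lambda>n. (a n * x^n + a n * (-x)^n) / 2) sums ((1 / cosh x + 1 / cosh (-x)) / 2)"
      using taylor[of x] taylor[of "-x"] that by (intro sums_divide sums_add) auto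
    moreover have "(\<lambda>n. (a n * x^n + a n * (-x)^n) / 2) = (\<lambda>n. if even n then a n * x^n else 0)"
    proof (rule ext)
      fix n show "(a n * x^n + a n * (-x)^n) / 2 = (if even n then a n * x^n else 0)"
        by (cases "even n") simp_all
    qed
    ultimately have "(\<lambda>n. if even n then a n * x^n else 0) sums (1 / cosh x)" by simp
    then have "(\<lambda>k. (\<lambda>n. if even n then a n * x^n else 0) (2*k)) sums (1 / cosh x)"
      by (subst sums_mono_reindex) (auto simp: strict_mono_def)
    then show ?thesis by (simp add: E_def)
  qed
  then show ?thesis by blast
qed

lemma euler_num_sums:
  "\<bar>x\<bar> < pi/2 \<Longrightarrow> (\<lambda>k. euler_num k / fact (2*k) * x^(2*k)) sums (1 / cosh x)"
  using someI_ex[OF sech_taylor_series_exists] unfolding euler_num_def by blast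

lemma euler_num_0: "euler_num 0 = 1"
proof -
  have "(\<lambda>k. euler_num k / fact (2*k) * (0::real)^(2*k)) sums (1 / cosh 0)"
    by (rule euler_num_sums) simp
  moreover have "(\<lambda>k. euler_num k / fact (2*k) * (0::real)^(2*k)) = (\<lambda>k. if k = 0 then euler_num 0 else 0)"
    by (simp add: fun_eq_iff)
  ultimately have "(\<lambda>k. if k = 0 then euler_num 0 else 0) sums 1" by simp
  moreover have "(\<lambda>k. if k = 0 then euler_num 0 else 0) sums euler_num 0"
    using sums_single[of 0 "\<lambda>_. euler_num 0"] by simp
  ultimately show ?thesis using sums_unique2 by metis
qed

lemma summable_abs_euler_num:
  assumes "0 \<le> x" "x < pi/2"
  shows "summable (\<lambda>k. \<bar>euler_num k / fact (2*k)\<bar> * x^(2*k))"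
proof -
  define y where "y = (x + pi/2) / 2"
  have y: "x < y" "y < pi/2" using assms by (auto simp: y_def)
  have "summable (\<lambda>k. euler_num k / fact (2*k) * (y^2)^k)"
    using euler_num_sums[of y] y assms by (simp add: sums_summable power_mult)
  moreover have "norm (x^2) < norm (y^2)" using assms y by (simp add: power_strict_mono)
  ultimately have "summable (\<lambda>k. norm (euler_num k / fact (2*k) * (x^2)^k))"
    by (rule powser_insidea)
  then show ?thesis by (simp add: abs_mult power_mult)
qed

lemma set_integral_power_series_sums:
  fixes c :: "nat \<Rightarrow> real" and p :: "nat \<Rightarrow> nat" and g F :: "real \<Rightarrow> real"
  assumes g: "set_integrable lborel A g"
    and A: "\<And>u. u \<in> A \<Longrightarrow> \<bar>u\<bar> \<le> b"
    and summable: "summable (\<lambda>k. \<bar>c k\<bar> * b ^ p k)"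
    and sums: "\<And>u. u \<in> A \<Longrightarrow> (\<lambda>k. c k * u ^ p k) sums F u"
  shows "(\<lambda>k. c k * (LBINT u:A. u ^ p k * g u)) sums (LBINT u:A. F u * g u)"
proof -
  define G where "G = (\<lambda>u. indicator A u *\<^sub>R g u)"
  define f where "f = (\<lambda>k u. c k * u ^ p k * G u)"
  have G: "integrable lborel G" using g by (simp add: set_integrable_def G_def)
  have f_norm: "norm (f k u) \<le> \<bar>c k\<bar> * b ^ p k * \<bar>G u\<bar>" for k u
  proof (cases "u \<in> A")
    case True
    then have "\<bar>u\<bar> ^ p k \<le> b ^ p k" using A by (intro power_mono) auto
    then show ?thesis
      by (simp add: f_def abs_mult power_abs mult_left_mono mult_right_mono)
  qed (simp add: f_def G_def)
  have f: "integrable lborel (f k)" for k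
  proof (rule Bochner_Integration.integrable_bound
      [OF integrable_mult_right[OF integrable_abs[OF G], of "\<bar>c k\<bar> * b ^ p k"]])
    show "f k \<in> borel_measurable lborel"
      using borel_measurable_integrable[OF G] unfolding f_def by measurable
    show "AE u in lborel. norm (f k u) \<le> norm (\<bar>c k\<bar> * b ^ p k * \<bar>G u\<bar>)"
      by (intro AE_I2 order_trans[OF f_norm]) simp
  qed
  have "(\<lambda>k. integral\<^sup>L lborel (f k)) sums (\<integral>u. (\<Sum>k. f k u) \<partial>lborel)"
  proof (rule sums_integral[OF f])
    show "AE u in lborel. summable (\<lambda>k. norm (f k u))"
      using f_norm by (intro AE_I2 summable_comparison_test'[OF summable_mult2[OF summable]]) auto
    have "(\<integral>u. norm (f k u) \<partial>lborel) \<le> \<bar>c k\<bar> * b ^ p k * (\<integral>u. \<bar>G u\<bar> \<partial>lborel)" for k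
      using integral_mono[OF integrable_norm[OF f] integrable_mult_right[OF integrable_abs[OF G]]
          f_norm] by simp
    then show "summable (\<lambda>k. \<integral>u. norm (f k u) \<partial>lborel)"
      by (intro summable_comparison_test'[OF summable_mult2[OF summable]]) auto
  qed
  moreover have "integral\<^sup>L lborel (f k) = c k * (LBINT u:A. u ^ p k * g u)" for k
    by (simp add: f_def G_def set_lebesgue_integral_def mult.assoc mult.left_commute)
  moreover have "(\<Sum>k. f k u) = indicator A u *\<^sub>R (F u * g u)" for u
    using sums_mult2[OF sums, of u "g u"] by (cases "u \<in> A") (auto simp: f_def G_def sums_iff)
  ultimately show ?thesis by (simp add: set_lebesgue_integral_def)
qed

lemma set_integrable_ln_Ioo:
  fixes b :: real assumes "b > 0" shows "set_integrable lborel {0<..<b} ln"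
proof (rule set_integrable_bound)
  show "set_integrable lborel {0<..<b} (\<lambda>u. 2 * cosh b * (ln u * half_sech u))"
    using set_integrable_ln_half_sech by (auto intro: set_integrable_subset)
  show "set_borel_measurable lborel {0<..<b} ln"
    unfolding set_borel_measurable_def by measurable
  show "AE u in lborel. u \<in> {0<..<b} \<longrightarrow> norm (ln u) \<le> norm (2 * cosh b * (ln u * half_sech u))"
  proof (rule AE_I2, intro impI)
    fix u assume "u \<in> {0<..<b}"
    then have "cosh u \<le> cosh b" by (simp add: cosh_real_nonneg_le_iff)
    then have "\<bar>ln u\<bar> * cosh u \<le> \<bar>ln u\<bar> * cosh b" by (rule mult_left_mono) simp
    then show "norm (ln u) \<le> norm (2 * cosh b * (ln u * half_sech u))"
      by (simp add: half_sech_def abs_mult le_divide_eq mult.commute)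
  qed
qed

lemma set_integrable_power_ln_Ioo:
  fixes b :: real assumes "b > 0" shows "set_integrable lborel {0<..<b} (\<lambda>u. u^n * ln u)"
proof (rule set_integrable_bound)
  show "set_integrable lborel {0<..<b} (\<lambda>u. b^n * ln u)"
    using set_integrable_ln_Ioo[OF assms] by simp
  show "set_borel_measurable lborel {0<..<b} (\<lambda>u. u^n * ln u)"
    unfolding set_borel_measurable_def by measurable
  show "AE u in lborel. u \<in> {0<..<b} \<longrightarrow> norm (u^n * ln u) \<le> norm (b^n * ln u)"
    by (auto intro!: AE_I2 mult_right_mono power_mono simp: abs_mult)
qed

lemma tendsto_x_ln_x_at_right_0: "((\<lambda>u::real. u * ln u) \<longlongrightarrow> 0) (at_right 0)"
proof -
  have "((\<lambda>u::real. - (ln (inverse u) / inverse u)) \<longlongrightarrow> -0) (at_right 0)"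
    by (intro tendsto_minus filterlim_compose[OF ln_x_over_x_tendsto_0 filterlim_inverse_at_top_right])
  moreover have "eventually (\<lambda>u::real. - (ln (inverse u) / inverse u) = u * ln u) (at_right 0)"
    by (rule eventually_at_rightI[of 0 1]) (auto simp: ln_inverse divide_inverse)
  ultimately show ?thesis using tendsto_cong by fastforce
qed

lemma power_ln_antiderivative:
  assumes x: "x > 0"
  shows "((\<lambda>u. u^(n+1) / real (n+1) * (ln u - 1 / real (n+1))) has_real_derivative x^n * ln x) (at x)"
proof -
  have "((\<lambda>u. u^(n+1) / real (n+1)) has_real_derivative real (n+1) * x^n / real (n+1)) (at x)"
    using DERIV_cdivide[OF DERIV_pow[of "n+1" x], of "real (n+1)"] by simp
  then have "((\<lambda>u. u^(n+1) / real (n+1)) has_real_derivative x^n) (at x)"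
    by (simp del: of_nat_Suc)
  moreover have "((\<lambda>u. ln u - 1 / real (n+1)) has_real_derivative 1 / x) (at x)"
    using x by (auto intro!: derivative_eq_intros)
  ultimately have "((\<lambda>u. u^(n+1) / real (n+1) * (ln u - 1 / real (n+1))) has_real_derivative
      x^n * (ln x - 1 / real (n+1)) + 1 / x * (x^(n+1) / real (n+1))) (at x)"
    by (rule DERIV_mult)
  moreover have "x^n * (ln x - 1 / real (n+1)) + 1 / x * (x^(n+1) / real (n+1)) = x^n * ln x"
    using x by (simp add: field_simps del: of_nat_Suc)
  ultimately show ?thesis by simp
qed

lemma set_integral_power_ln_Ioo:
  fixes b :: real assumes b: "b > 0"
  shows "(LBINT u:{0<..<b}. u^n * ln u) = b^(n+1) / real (n+1) * (ln b - 1 / real (n+1))"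
proof -
  define F where "F = (\<lambda>u::real. u^(n+1) / real (n+1) * (ln u - 1 / real (n+1)))"
  have "(LBINT u=ereal 0..ereal b. u^n * ln u) = F b - 0"
  proof (rule interval_integral_FTC_integrable)
    show "(F has_vector_derivative x^n * ln x) (at x)" if "ereal 0 < ereal x" for x
      using power_ln_antiderivative[of x n] that
      by (simp add: F_def has_real_derivative_iff_has_vector_derivative)
    show "set_integrable lborel (einterval (ereal 0) (ereal b)) (\<lambda>x. x^n * ln x)"
      using set_integrable_power_ln_Ioo[OF b] by simp
    have "((\<lambda>u. u^n * (u * ln u) / real (n+1) - u^(n+1) / real (n+1) / real (n+1)) \<longlongrightarrow>
        0^n * 0 / real (n+1) - 0^(n+1) / real (n+1) / real (n+1)) (at_right 0)"
      by (intro tendsto_intros tendsto_x_ln_x_at_right_0) (simp_all del: of_nat_Suc)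
    moreover have "F = (\<lambda>u. u^n * (u * ln u) / real (n+1) - u^(n+1) / real (n+1) / real (n+1))"
      by (simp add: fun_eq_iff F_def divide_inverse algebra_simps power_Suc2 del: of_nat_Suc)
    ultimately show "((F \<circ> real_of_ereal) \<longlongrightarrow> 0) (at_right (ereal 0))"
      unfolding ereal_tendsto_simps by simp
    show "((F \<circ> real_of_ereal) \<longlongrightarrow> F b) (at_left (ereal b))"
      unfolding ereal_tendsto_simps F_def using b by (intro tendsto_intros) auto
    show "isCont (\<lambda>x. x^n * ln x) x" if "ereal 0 < ereal x" for x
      using that by (auto intro!: continuous_intros)
  qed (use b in simp)
  then show ?thesis
    by (simp add: interval_lebesgue_integral_def F_def b less_imp_le)
qed

lemma set_integral_ln_div_cosh_Ioo_sums:
  assumes b: "0 < b" "b < pi/2"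
  shows "(\<lambda>k. euler_num k * b^(2*k+1) / fact (2*k+1) * (ln b - 1 / real (2*k+1)))
           sums (LBINT u:{0<..<b}. ln u / cosh u)"
proof -
  have "(\<lambda>k. euler_num k / fact (2*k) * (LBINT u:{0<..<b}. u^(2*k) * ln u))
      sums (LBINT u:{0<..<b}. 1 / cosh u * ln u)"
    using b summable_abs_euler_num[of b]
    by (intro set_integral_power_series_sums[OF set_integrable_ln_Ioo[OF b(1)]] euler_num_sums)
      auto
  moreover have "euler_num k / fact (2*k) * (b^(2*k+1) / real (2*k+1) * (ln b - 1 / real (2*k+1)))
      = euler_num k * b^(2*k+1) / fact (2*k+1) * (ln b - 1 / real (2*k+1))" for k
    by (simp add: field_simps del: of_nat_Suc)
  ultimately show ?thesis using b by (simp add: set_integral_power_ln_Ioo)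
qed

section \<open>The series for J2\<close>

lemma J2_eq_half_integral_ln_div_cosh: "J2 = 1/2 * (LBINT u:{0<..}. ln u / cosh u)"
  unfolding J2_eq_integral_ln_half_sech half_sech_def
  by (simp flip: set_integral_mult_right)

lemma J2_series_sums:
  assumes b: "0 < b" "b < pi / 2"
  shows "(\<lambda>k. euler_num (Suc k) * b ^ (2 * Suc k + 1) / fact (2 * Suc k + 1)
              * (ln b - 1 / real (2 * Suc k + 1)))
         sums (2 * J2 - b * (ln b - 1) - (LBINT u:{b..}. ln u / cosh u))"
proof -
  have int: "set_integrable lborel {0<..} (\<lambda>u::real. ln u / cosh u)"
    using set_integrable_mult_right[OF set_integrable_ln_half_sech, of 2]
    by (simp add: half_sech_def)
  have "{0<..} = {0<..<b} \<union> {b..}" using b by auto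
  then have "2 * J2 = (LBINT u:{0<..<b}. ln u / cosh u) + (LBINT u:{b..}. ln u / cosh u)"
    unfolding J2_eq_half_integral_ln_div_cosh
    by (simp, intro set_integral_Un) (use set_integrable_subset[OF int] in auto)
  with set_integral_ln_div_cosh_Ioo_sums[OF b] show ?thesis
    by (subst sums_Suc_iff) (simp add: euler_num_0)
qed

theorem proposition9:
  shows "sierpinski_S = 2 * euler_mascheroni + 4 / pi * J2
    \<and> (\<forall>b::real. 0 < b \<and> b < pi / 2 \<longrightarrow>
         J2 = 1/2 * (\<Sum>k. euler_num (Suc k) * b ^ (2 * Suc k + 1) / fact (2 * Suc k + 1)
                       * (ln b - 1 / real (2 * Suc k + 1)))
              + b / 2 * (ln b - 1)
              + 1/2 * (LBINT u:{b..}. ln u / cosh u))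
    \<and> J2 = - 1/2 * (1 + (\<Sum>k. euler_num (Suc k) / fact (2 * Suc k + 1) / real (2 * Suc k + 1)))
           + 1/2 * (LBINT u:{1..}. ln u / cosh u)"
proof (intro conjI allI impI)
  show "sierpinski_S = 2 * euler_mascheroni + 4 / pi * J2"
    by (simp add: sierpinski_S_eq_integral_ln_half_sech J2_eq_integral_ln_half_sech)
next
  fix b :: real assume "0 < b \<and> b < pi / 2"
  then have "0 < b" "b < pi / 2" by auto
  have "J2 = 1/2 * S + b / 2 * (ln b - 1) + 1/2 * T"
    if "S = 2 * J2 - b * (ln b - 1) - T" for S T
    using that by (simp add: field_simps)
  from this[OF sums_unique[OF J2_series_sums[OF \<open>0 < b\<close> \<open>b < pi / 2\<close>], symmetric]]
  show "J2 = 1/2 * (\<Sum>k. euler_num (Suc k) * b ^ (2 * Suc k + 1) / fact (2 * Suc k + 1)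
                       * (ln b - 1 / real (2 * Suc k + 1)))
              + b / 2 * (ln b - 1)
              + 1/2 * (LBINT u:{b..}. ln u / cosh u)" .
next
  have sums: "(\<lambda>k. euler_num (Suc k) / fact (2 * Suc k + 1) / real (2 * Suc k + 1))
      sums ((LBINT u:{1..}. ln u / cosh u) - (2 * J2 + 1))" (is "?E sums _")
    using sums_minus[OF J2_series_sums[of 1]] pi_gt3 by simp
  have "J2 = - 1/2 * (1 + S) + 1/2 * T" if "S = T - (2 * J2 + 1)" for S T
    using that by (simp add: field_simps)
  from this[OF sums_unique[OF sums, symmetric]]
  show "J2 = - 1/2 * (1 + suminf ?E) + 1/2 * (LBINT u:{1..}. ln u / cosh u)" .
qed

end
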